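(* Let $(T,X)$ be a flow, where $T$ is a Hausdorff topological group and $X$ is a Hausdorff uniform space which is a Baire space. If $(T,X)$ is thickly stable and $x\in X$ is a regularly a.p. point, then $(T,\overline{Tx})$ is a pointwise regularly a.p. and equicontinuous subflow of $(T,X)$ (i.e. every point of $\overline{Tx}$ is a regularly a.p. point, and $(T,\overline{Tx})$ is equicontinuous).
   Context: $\mathscr U_X$ is a compatible symmetric uniformity of $X$; $\varepsilon[A]=\{y:\exists a\in A,(a,y)\in\varepsilon\}$. $S\subseteq T$ is (right) thick if for every compact $K\subseteq T$ there is $t$ with $Kt\subseteq S$; $A\subseteq T$ is (right) syndetic if there is compact $K$ with $Kt\cap A\neq\emptyset$ for all $t\in T$. A flow is thickly stable if for every $\varepsilon\in\mathscr U_X$ and $x\in X$ there exist $\delta\in\mathscr U_X$ and a thick $S\subseteq T$ with $s(\delta[x])\subseteq\varepsilon[sx]$ for all $s\in S$. A point $x$ is regularly a.p. if for every neighborhood $U$ of $x$ the set $\{t\in T: tx\in U\}$ contains a syndetic normal closed subgroup of $T$. A flow $(T,Z)$ is equicontinuous if for every $\varepsilon$ and $z\in Z$ there is $\delta$ with $t(\delta[z])\subseteq\varepsilon[tz]$ for all $t\in T$. *)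

theory Defs
  imports "HOL-Analysis.Analysis"
begin

text \<open>The group T is written additively (Isabelle class group_add, which is NOT
 assumed commutative). So the paper's product st is s + t, identity is 0,
 inverse is uminus.\<close>

definition sym_entourages :: "('a::uniform_space \<times> 'a) set set" where
  "sym_entourages = {E. eventually (\<lambda>p. p \<in> E) uniformity \<and> (\<forall>a b. (a,b) \<in> E \<longrightarrow> (b,a) \<in> E)}"

definition ent_img :: "('a \<times> 'a) set \<Rightarrow> 'a set \<Rightarrow> 'a set" where
  "ent_img E A = {y. \<exists>a\<in>A. (a, y) \<in> E}"

definition baire_space :: "'a::topological_space itself \<Rightarrow> bool" where
  "baire_space _ \<longleftrightarrow> (\<forall>\<G> :: 'a set set. countable \<G> \<and> (\<forall>U\<in>\<G>. open U \<and> closure U = UNIV)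
       \<longrightarrow> closure (\<Inter>\<G>) = UNIV)"

definition flow :: "('t::topological_group_add \<Rightarrow> 'x::topological_space \<Rightarrow> 'x) \<Rightarrow> bool" where
  "flow act \<longleftrightarrow> (\<forall>x. act 0 x = x) \<and> (\<forall>s t x. act (s + t) x = act s (act t x))
     \<and> continuous_on UNIV (\<lambda>p. act (fst p) (snd p))"

definition right_thick :: "'t::topological_group_add set \<Rightarrow> bool" where
  "right_thick S \<longleftrightarrow> (\<forall>K. compact K \<longrightarrow> (\<exists>t. (\<lambda>k. k + t) ` K \<subseteq> S))"

definition right_syndetic :: "'t::topological_group_add set \<Rightarrow> bool" where
  "right_syndetic A \<longleftrightarrow> (\<exists>K. compact K \<and> (\<forall>t. (\<lambda>k. k + t) ` K \<inter> A \<noteq> {}))"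

definition normal_closed_subgroup :: "'t::topological_group_add set \<Rightarrow> bool" where
  "normal_closed_subgroup H \<longleftrightarrow> 0 \<in> H \<and> (\<forall>a\<in>H. \<forall>b\<in>H. a + b \<in> H) \<and> (\<forall>a\<in>H. - a \<in> H)
     \<and> (\<forall>g. \<forall>h\<in>H. g + h + - g \<in> H) \<and> closed H"

definition thickly_stable :: "('t::topological_group_add \<Rightarrow> 'x::uniform_space \<Rightarrow> 'x) \<Rightarrow> bool" where
  "thickly_stable act \<longleftrightarrow> (\<forall>\<epsilon>\<in>sym_entourages. \<forall>x. \<exists>\<delta>\<in>sym_entourages. \<exists>S. right_thick S \<and>
      (\<forall>s\<in>S. act s ` ent_img \<delta> {x} \<subseteq> ent_img \<epsilon> {act s x}))"

definition regularly_ap :: "('t::topological_group_add \<Rightarrow> 'x::topological_space \<Rightarrow> 'x) \<Rightarrow> 'x \<Rightarrow> bool" where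
  "regularly_ap act x \<longleftrightarrow> (\<forall>U. (\<exists>V. open V \<and> x \<in> V \<and> V \<subseteq> U) \<longrightarrow>
      (\<exists>H. normal_closed_subgroup H \<and> right_syndetic H \<and> H \<subseteq> {t. act t x \<in> U}))"

definition equicontinuous_on :: "('t \<Rightarrow> 'x::uniform_space \<Rightarrow> 'x) \<Rightarrow> 'x set \<Rightarrow> bool" where
  "equicontinuous_on act Z \<longleftrightarrow> (\<forall>\<epsilon>\<in>sym_entourages. \<forall>z\<in>Z. \<exists>\<delta>\<in>sym_entourages. \<forall>t.
      act t ` (ent_img \<delta> {z} \<inter> Z) \<subseteq> ent_img \<epsilon> {act t z})"

end

theory Submission
  imports Defs
begin

text \<open>Thick stability at x and regular almost periodicity of x give, for every entourage
  \<open>\<epsilon>\<close>, a syndetic closed normal subgroup H that moves every point of the orbit closure of x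
  by less than \<open>\<epsilon>\<close>. Indeed, since H is syndetic and the stability set S is thick, every t
  splits as t = h' + s with h' in H and s in S; conjugating by s moves the recurrence of x
  under H to recurrence of sx, stability along S keeps it small, and continuity extends it
  from the orbit to its closure. Regular almost periodicity of the closure points is then
  immediate, and equicontinuity follows from the same splitting t = h + s applied to two
  nearby points.\<close>

lemma mem_ent_img_singleton [simp]: "y \<in> ent_img E {z} \<longleftrightarrow> (z, y) \<in> E"
  unfolding ent_img_def by simp

lemma sym_entourage_refl: "E \<in> sym_entourages \<Longrightarrow> (a, a) \<in> E"
  unfolding sym_entourages_def using uniformity_refl[of "\<lambda>p. p \<in> E"] by auto

lemma sym_entourage_sym: "E \<in> sym_entourages \<Longrightarrow> (a, b) \<in> E \<Longrightarrow> (b, a) \<in> E"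
  unfolding sym_entourages_def by auto

lemma sym_entourage_half:
  assumes "(E::('a::uniform_space \<times> 'a) set) \<in> sym_entourages"
  obtains D where "D \<in> sym_entourages" "D O D \<subseteq> E"
proof -
  from assms have "eventually (\<lambda>p. p \<in> E) uniformity" unfolding sym_entourages_def by auto
  then obtain P where P: "eventually P uniformity" "\<And>x y z. P (x, y) \<Longrightarrow> P (y, z) \<Longrightarrow> (x, z) \<in> E"
    by (rule uniformity_transE) auto
  define D where "D = {(a, b). P (a, b) \<and> P (b, a)}"
  have "eventually (\<lambda>(x, y). P (y, x)) uniformity" using uniformity_sym[OF P(1)] .
  then have "eventually (\<lambda>p. p \<in> D) uniformity"
    using P(1) unfolding D_def by (auto elim: eventually_elim2)
  then have "D \<in> sym_entourages" unfolding sym_entourages_def D_def by auto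
  moreover have "D O D \<subseteq> E" using P(2) unfolding D_def by auto
  ultimately show ?thesis using that by blast
qed

lemma sym_entourage_third:
  assumes "(E::('a::uniform_space \<times> 'a) set) \<in> sym_entourages"
  obtains D where "D \<in> sym_entourages" "D O D O D \<subseteq> E"
proof -
  obtain D1 where D1: "D1 \<in> sym_entourages" "D1 O D1 \<subseteq> E"
    using sym_entourage_half[OF assms] .
  obtain D where D: "D \<in> sym_entourages" "D O D \<subseteq> D1"
    using sym_entourage_half[OF D1(1)] .
  have "D \<subseteq> D1" using D sym_entourage_refl[OF D(1)] by auto
  then have "D O D O D \<subseteq> D1 O D1" using D(2) by auto
  then show ?thesis using that D(1) D1(2) by blast
qed

lemma sym_entourage_nhds:
  assumes "(E::('a::uniform_space \<times> 'a) set) \<in> sym_entourages"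
  obtains V where "open V" "z \<in> V" "V \<subseteq> ent_img E {z}"
proof -
  from assms have "eventually (\<lambda>p. p \<in> E) uniformity" unfolding sym_entourages_def by auto
  then have "eventually (\<lambda>(x', y). x' = z \<longrightarrow> y \<in> ent_img E {z}) uniformity"
    by (auto elim: eventually_mono)
  then have "eventually (\<lambda>y. y \<in> ent_img E {z}) (nhds z)"
    by (simp add: eventually_nhds_uniformity)
  then show ?thesis using that unfolding eventually_nhds by (metis mem_ent_img_singleton subsetI)
qed

lemma open_contains_ent_img:
  assumes "open (V::'a::uniform_space set)" "z \<in> V"
  obtains E where "E \<in> sym_entourages" "ent_img E {z} \<subseteq> V"
proof -
  have "eventually (\<lambda>y. y \<in> V) (nhds z)" using assms eventually_nhds by blast
  then have ev: "eventually (\<lambda>(x', y). x' = z \<longrightarrow> y \<in> V) uniformity"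
    by (simp add: eventually_nhds_uniformity)
  define E where "E = {(a, b). (a = z \<longrightarrow> b \<in> V) \<and> (b = z \<longrightarrow> a \<in> V)}"
  have "eventually (\<lambda>(x, y). y = z \<longrightarrow> x \<in> V) uniformity"
    using uniformity_sym[OF ev] by simp
  then have "eventually (\<lambda>p. p \<in> E) uniformity"
    using ev unfolding E_def by (auto elim: eventually_elim2)
  then have "E \<in> sym_entourages" unfolding sym_entourages_def E_def by auto
  moreover have "ent_img E {z} \<subseteq> V" unfolding E_def by auto
  ultimately show ?thesis using that by blast
qed

lemma displacement_closure:
  fixes f :: "'a::uniform_space \<Rightarrow> 'a"
  assumes "continuous_on UNIV f" "D \<in> sym_entourages"
    and "\<And>y. y \<in> A \<Longrightarrow> (y, f y) \<in> D" and "z \<in> closure A"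
  shows "(z, f z) \<in> D O D O D"
proof -
  obtain W where W: "open W" "z \<in> W" "W \<subseteq> ent_img D {z}"
    using sym_entourage_nhds[OF assms(2)] .
  obtain W' where W': "open W'" "f z \<in> W'" "W' \<subseteq> ent_img D {f z}"
    using sym_entourage_nhds[OF assms(2)] .
  have "open (W \<inter> f -` W')"
    using W(1) W'(1) assms(1) continuous_on_open_vimage[OF open_UNIV] by auto
  then obtain y where y: "y \<in> A" "y \<in> W" "f y \<in> W'"
    using assms(4) W(2) W'(2) closure_iff_nhds_not_empty by blast
  have "(z, y) \<in> D" "(f y, f z) \<in> D"
    using y W(3) W'(3) sym_entourage_sym[OF assms(2)] by auto
  then show ?thesis using assms(3)[OF y(1)] by blast
qed

lemma normal_closed_subgroupD:
  assumes "normal_closed_subgroup H"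
  shows "a \<in> H \<Longrightarrow> b \<in> H \<Longrightarrow> a + b \<in> H" and "h \<in> H \<Longrightarrow> g + h + - g \<in> H"
  using assms unfolding normal_closed_subgroup_def by blast+

lemma syndetic_normal_subgroup_plus_thick:
  fixes H S :: "'t::topological_group_add set"
  assumes "normal_closed_subgroup H" "right_syndetic H" "right_thick S"
  obtains h s where "h \<in> H" "s \<in> S" "t = h + s"
proof -
  obtain K where K: "compact K" "\<And>t. (\<lambda>k. k + t) ` K \<inter> H \<noteq> {}"
    using assms(2) unfolding right_syndetic_def by blast
  have "compact (uminus ` K)"
    by (rule compact_continuous_image[OF _ K(1)]) (intro continuous_intros)
  then obtain t0 where t0: "(\<lambda>k. k + t0) ` (uminus ` K) \<subseteq> S"
    using assms(3) unfolding right_thick_def by blast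
  obtain k where k: "k \<in> K" "k + (t + - t0) \<in> H" using K(2)[of "t + - t0"] by blast
  define s where "s = - k + t0"
  have "s \<in> S" using t0 k(1) unfolding s_def by auto
  have "- k + (k + (t + - t0)) + - (- k) \<in> H"
    using normal_closed_subgroupD(2)[OF assms(1) k(2)] .
  also have "- k + (k + (t + - t0)) + - (- k) = t + - s"
    unfolding s_def by (simp add: minus_add add.assoc) (simp only: diff_conv_add_uminus add.assoc)
  finally have "t + - s \<in> H" .
  moreover have "t = (t + - s) + s" by (simp add: add.assoc)
  ultimately show ?thesis using that \<open>s \<in> S\<close> by blast
qed

lemma flow_add: "flow act \<Longrightarrow> act (s + t) x = act s (act t x)"
  unfolding flow_def by blast

lemma flow_continuous_on:
  assumes "flow act"
  shows "continuous_on UNIV (act t)"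
proof -
  have joint: "continuous_on UNIV (\<lambda>p. act (fst p) (snd p))" using assms unfolding flow_def by auto
  have "continuous_on UNIV ((\<lambda>p. act (fst p) (snd p)) \<circ> (\<lambda>y. (t, y)))"
    by (rule continuous_on_compose[OF _ continuous_on_subset[OF joint]]) (auto intro: continuous_intros)
  then show ?thesis by (simp add: o_def)
qed

lemma flow_orbit_closure_invariant:
  assumes "flow act" "z \<in> closure (range (\<lambda>t. act t x))"
  shows "act t z \<in> closure (range (\<lambda>t. act t x))"
proof -
  have "act t ` range (\<lambda>t. act t x) \<subseteq> range (\<lambda>t. act t x)"
    by (auto simp: flow_add[OF assms(1), symmetric])
  then have "act t ` closure (range (\<lambda>t. act t x)) \<subseteq> closure (range (\<lambda>t. act t x))"
    using closure_subset[of "range (\<lambda>t. act t x)"]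
    by (intro image_closure_subset continuous_on_subset[OF flow_continuous_on[OF assms(1)]]) blast+
  then show ?thesis using assms(2) by auto
qed

lemma orbit_displacement_subgroup:
  fixes act :: "'t::topological_group_add \<Rightarrow> 'x::uniform_space \<Rightarrow> 'x"
  assumes fl: "flow act" and "thickly_stable act" "regularly_ap act x" "\<epsilon> \<in> sym_entourages"
  obtains H where "normal_closed_subgroup H" "right_syndetic H"
    "\<And>t h. h \<in> H \<Longrightarrow> (act t x, act h (act t x)) \<in> \<epsilon>"
proof -
  obtain D where D: "D \<in> sym_entourages" "D O D \<subseteq> \<epsilon>" using sym_entourage_half[OF assms(4)] .
  obtain \<delta> S where \<delta>S: "\<delta> \<in> sym_entourages" "right_thick S"
    "\<And>s. s \<in> S \<Longrightarrow> act s ` ent_img \<delta> {x} \<subseteq> ent_img D {act s x}"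
    using assms(2) D(1) unfolding thickly_stable_def by metis
  obtain V where "open V" "x \<in> V" "V \<subseteq> ent_img \<delta> {x}" using sym_entourage_nhds[OF \<delta>S(1)] .
  then obtain H where H: "normal_closed_subgroup H" "right_syndetic H"
    "H \<subseteq> {t. act t x \<in> ent_img \<delta> {x}}"
    using assms(3) unfolding regularly_ap_def by blast
  have along_S: "(act s x, act (g + s) x) \<in> D" if "s \<in> S" "g \<in> H" for s g
  proof -
    have "- s + g + s \<in> H" using normal_closed_subgroupD(2)[OF H(1) that(2), of "- s"] by simp
    then have "act (- s + g + s) x \<in> ent_img \<delta> {x}" using H(3) by blast
    then have "act s (act (- s + g + s) x) \<in> ent_img D {act s x}" using \<delta>S(3)[OF that(1)] by blast
    moreover have "act s (act (- s + g + s) x) = act (g + s) x"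
      using flow_add[OF fl] by (metis add.assoc add_minus_cancel)
    ultimately show ?thesis by simp
  qed
  have "(act t x, act h (act t x)) \<in> \<epsilon>" if "h \<in> H" for t h
  proof -
    obtain h' s where hs: "h' \<in> H" "s \<in> S" "t = h' + s"
      using syndetic_normal_subgroup_plus_thick[OF H(1,2) \<delta>S(2)] .
    have "(act t x, act s x) \<in> D"
      using along_S[OF hs(2,1)] hs(3) sym_entourage_sym[OF D(1)] by simp
    moreover have "(act s x, act h (act t x)) \<in> D"
      using along_S[OF hs(2) normal_closed_subgroupD(1)[OF H(1) that hs(1)]] hs(3)
      by (simp add: flow_add[OF fl] add.assoc)
    ultimately show ?thesis using D(2) by blast
  qed
  then show ?thesis using that H(1,2) by blast
qed

lemma orbit_closure_displacement_subgroup: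
  fixes act :: "'t::topological_group_add \<Rightarrow> 'x::uniform_space \<Rightarrow> 'x"
  assumes fl: "flow act" and "thickly_stable act" "regularly_ap act x" "\<epsilon> \<in> sym_entourages"
  obtains H where "normal_closed_subgroup H" "right_syndetic H"
    "\<And>z h. z \<in> closure (range (\<lambda>t. act t x)) \<Longrightarrow> h \<in> H \<Longrightarrow> (z, act h z) \<in> \<epsilon>"
proof -
  obtain D where D: "D \<in> sym_entourages" "D O D O D \<subseteq> \<epsilon>" using sym_entourage_third[OF assms(4)] .
  obtain H where H: "normal_closed_subgroup H" "right_syndetic H"
    "\<And>t h. h \<in> H \<Longrightarrow> (act t x, act h (act t x)) \<in> D"
    using orbit_displacement_subgroup[OF assms(1-3) D(1)] by blast
  have "(z, act h z) \<in> \<epsilon>" if "z \<in> closure (range (\<lambda>t. act t x))" "h \<in> H" for z h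
    using displacement_closure[OF flow_continuous_on[OF fl] D(1) _ that(1)] H(3)[OF that(2)] D(2)
    by blast
  then show ?thesis using that H(1,2) by blast
qed

lemma regularly_ap_orbit_closure:
  fixes act :: "'t::topological_group_add \<Rightarrow> 'x::uniform_space \<Rightarrow> 'x"
  assumes "flow act" "thickly_stable act" "regularly_ap act x"
    and z: "z \<in> closure (range (\<lambda>t. act t x))"
  shows "regularly_ap act z"
  unfolding regularly_ap_def
proof (intro allI impI)
  fix U assume "\<exists>V. open V \<and> z \<in> V \<and> V \<subseteq> U"
  then obtain V where V: "open V" "z \<in> V" "V \<subseteq> U" by blast
  obtain E where E: "E \<in> sym_entourages" "ent_img E {z} \<subseteq> V"
    using open_contains_ent_img[OF V(1,2)] .
  obtain H where H: "normal_closed_subgroup H" "right_syndetic H"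
    "\<And>h. h \<in> H \<Longrightarrow> (z, act h z) \<in> E"
    using orbit_closure_displacement_subgroup[OF assms(1-3) E(1)] z by metis
  have "H \<subseteq> {t. act t z \<in> U}" using H(3) E(2) V(3) by (force simp: subset_eq)
  then show "\<exists>H. normal_closed_subgroup H \<and> right_syndetic H \<and> H \<subseteq> {t. act t z \<in> U}"
    using H(1,2) by blast
qed

lemma equicontinuous_on_orbit_closure:
  fixes act :: "'t::topological_group_add \<Rightarrow> 'x::uniform_space \<Rightarrow> 'x"
  assumes fl: "flow act" and ts: "thickly_stable act" and "regularly_ap act x"
  defines "Z \<equiv> closure (range (\<lambda>t. act t x))"
  shows "equicontinuous_on act Z"
  unfolding equicontinuous_on_def
proof (intro ballI)
  fix \<epsilon> :: "('x \<times> 'x) set" and z assume \<epsilon>: "\<epsilon> \<in> sym_entourages" and "z \<in> Z"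
  obtain D where D: "D \<in> sym_entourages" "D O D O D \<subseteq> \<epsilon>" using sym_entourage_third[OF \<epsilon>] .
  obtain \<delta> S where \<delta>S: "\<delta> \<in> sym_entourages" "right_thick S"
    "\<And>s. s \<in> S \<Longrightarrow> act s ` ent_img \<delta> {z} \<subseteq> ent_img D {act s z}"
    using ts D(1) unfolding thickly_stable_def by metis
  obtain H where H: "normal_closed_subgroup H" "right_syndetic H"
    "\<And>w h. w \<in> Z \<Longrightarrow> h \<in> H \<Longrightarrow> (w, act h w) \<in> D"
    using orbit_closure_displacement_subgroup[OF assms(1-3) D(1)] unfolding Z_def by metis
  have "(act t z, act t y) \<in> \<epsilon>" if y: "(z, y) \<in> \<delta>" "y \<in> Z" for t y
  proof -
    obtain h s where hs: "h \<in> H" "s \<in> S" "t = h + s"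
      using syndetic_normal_subgroup_plus_thick[OF H(1,2) \<delta>S(2)] .
    have sZ: "act s w \<in> Z" if "w \<in> Z" for w
      using flow_orbit_closure_invariant[OF fl] that unfolding Z_def by blast
    have "(act t z, act s z) \<in> D"
      using H(3)[OF sZ[OF \<open>z \<in> Z\<close>] hs(1)] hs(3) sym_entourage_sym[OF D(1)]
      by (simp add: flow_add[OF fl])
    moreover have "(act s z, act s y) \<in> D" using \<delta>S(3)[OF hs(2)] y(1) by (auto simp: subset_eq)
    moreover have "(act s y, act t y) \<in> D"
      using H(3)[OF sZ[OF y(2)] hs(1)] hs(3) by (simp add: flow_add[OF fl])
    ultimately show ?thesis using D(2) by blast
  qed
  then show "\<exists>\<delta>\<in>sym_entourages. \<forall>t. act t ` (ent_img \<delta> {z} \<inter> Z) \<subseteq> ent_img \<epsilon> {act t z}"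
    using \<delta>S(1) by (intro bexI[of _ \<delta>]) (auto simp: subset_eq)
qed

theorem theorem2p6:
  fixes act :: "'t::{topological_group_add, t2_space} \<Rightarrow> 'x::{uniform_space, t2_space} \<Rightarrow> 'x"
    and x :: 'x
  assumes "flow act"
    and "baire_space TYPE('x)"
    and "thickly_stable act"
    and "regularly_ap act x"
  shows "(\<forall>t. \<forall>z\<in>closure (range (\<lambda>t. act t x)). act t z \<in> closure (range (\<lambda>t. act t x)))
    \<and> (\<forall>z\<in>closure (range (\<lambda>t. act t x)). regularly_ap act z)
    \<and> equicontinuous_on act (closure (range (\<lambda>t. act t x)))"
  using flow_orbit_closure_invariant[OF assms(1)]
    regularly_ap_orbit_closure[OF assms(1,3,4)]
    equicontinuous_on_orbit_closure[OF assms(1,3,4)]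
  by blast

end
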